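(* Let $D\ge 1$ be an integer and let $Q_D$ be the $D$-dimensional hypercube with vertex set $X=\{0,1\}^D$ and adjacency matrix $A$. The matrices $I,\alpha_1,\alpha_2,\ldots,\alpha_D$ form a basis for the space of symmetric $A$-like matrices of $Q_D$. In particular, this space has dimension $D+1$.
   Context: $Q_D$ is the graph with vertex set $X=\{0,1\}^D$ (sequences $x=(x_1,\ldots,x_D)$ with $x_i\in\{0,1\}$), two vertices being adjacent iff they differ in exactly one coordinate. $\mathrm{Mat}_X(\mathbb{R})$ denotes the real matrices with rows and columns indexed by $X$; $A$ is the adjacency matrix of $Q_D$ and $I$ the identity. A matrix $B\in\mathrm{Mat}_X(\mathbb{R})$ is called $A$-like if (i) $BA=AB$ and (ii) $B_{xy}=0$ for all $x,y\in X$ that are neither equal nor adjacent. For $1\le i\le D$, two vertices are $i$-adjacent if they differ in the $i$-th coordinate and agree in all others, and $\alpha_i\in\mathrm{Mat}_X(\mathbb{R})$ has $(x,y)$-entry $1$ if $x,y$ are $i$-adjacent and $0$ otherwise. *)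

theory Defs
  imports "HOL-Analysis.Analysis"
begin

text \<open>The hypercube Q_D: vertices are functions x :: 'n \<Rightarrow> bool, where the
  finite type 'n indexes the D = CARD('n) coordinates (so D \<ge> 1 automatically).\<close>

definition cube_adj :: "('n::finite \<Rightarrow> bool) \<Rightarrow> ('n \<Rightarrow> bool) \<Rightarrow> bool" where
  "cube_adj x y \<longleftrightarrow> card {i. x i \<noteq> y i} = 1"

definition cube_A :: "real ^ ('n::finite \<Rightarrow> bool) ^ ('n \<Rightarrow> bool)" where
  "cube_A = (\<chi> x y. if cube_adj x y then 1 else 0)"

definition i_adj :: "'n::finite \<Rightarrow> ('n \<Rightarrow> bool) \<Rightarrow> ('n \<Rightarrow> bool) \<Rightarrow> bool" where
  "i_adj i x y \<longleftrightarrow> x i \<noteq> y i \<and> (\<forall>j. j \<noteq> i \<longrightarrow> x j = y j)"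

definition cube_alpha :: "'n::finite \<Rightarrow> real ^ ('n \<Rightarrow> bool) ^ ('n \<Rightarrow> bool)" where
  "cube_alpha i = (\<chi> x y. if i_adj i x y then 1 else 0)"

definition A_like :: "real ^ ('n::finite \<Rightarrow> bool) ^ ('n \<Rightarrow> bool) \<Rightarrow> bool" where
  "A_like B \<longleftrightarrow> B ** cube_A = cube_A ** B \<and>
     (\<forall>x y. x \<noteq> y \<and> \<not> cube_adj x y \<longrightarrow> B $ x $ y = 0)"

end

theory Submission
  imports Defs
begin

text \<open>Write x' for x with coordinate i flipped and x'' for x' with coordinate j flipped.
  Comparing the entries of BA and AB at (x, x') shows that the diagonal of an A-like
  matrix B is constant along edges, hence constant. For symmetric B put w(x,i) = B(x, x');
  comparing the entries at the two diagonals (x, x'') and (x', x with j flipped) of a square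
  gives two linear relations whose difference is w(x',j) = w(x,j). So w(x,j) depends only
  on j, i.e. B = c I + \<Sum>j d(j) \<alpha>(j). Conversely I and the \<alpha>(j) are symmetric and A-like,
  and they are independent because c and d(j) can be read off the entries (x, x) and
  (x, x with j flipped).\<close>

type_synonym 'n cube_matrix = "real ^ ('n \<Rightarrow> bool) ^ ('n \<Rightarrow> bool)"

definition flip :: "('n \<Rightarrow> bool) \<Rightarrow> 'n \<Rightarrow> 'n \<Rightarrow> bool" where
  "flip x i = x(i := \<not> x i)"

lemma flip_apply: "flip x i j = (if j = i then \<not> x i else x j)"
  by (simp add: flip_def)

lemma flip_flip [simp]: "flip (flip x i) i = x"
  by (auto simp: flip_def fun_eq_iff)

lemma flip_commute: "flip (flip x i) j = flip (flip x j) i"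
  by (auto simp: flip_def fun_eq_iff)

lemma flip_neq [simp]: "flip x i \<noteq> x" "x \<noteq> flip x i"
  by (auto simp: flip_def fun_eq_iff)

lemma flip_eq_flip_iff [simp]: "flip x i = flip x j \<longleftrightarrow> i = j"
  by (auto simp: flip_def fun_eq_iff split: if_splits)

lemma eq_flip_iff: "y = flip x i \<longleftrightarrow> x = flip y i"
  by auto

lemma inj_flip: "inj (flip x)"
  by (simp add: inj_on_def)

lemma flip_invariant_const:
  fixes x y :: "'n::finite \<Rightarrow> bool"
  assumes "\<And>x i. f (flip x i) = f x"
  shows "f x = f y"
proof -
  have flips: "f (\<lambda>m. if m \<in> F then \<not> x m else x m) = f x" if "finite F" for F
    using that
  proof (induction F rule: finite_induct)
    case (insert a F)
    then have "(\<lambda>m. if m \<in> insert a F then \<not> x m else x m)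
        = flip (\<lambda>m. if m \<in> F then \<not> x m else x m) a"
      by (auto simp: flip_def fun_eq_iff)
    then show ?case using insert.IH assms by simp
  qed simp
  have "(\<lambda>m. if m \<in> {m. x m \<noteq> y m} then \<not> x m else x m) = y"
    by auto
  from flips[of "{m. x m \<noteq> y m}", OF finite, unfolded this] show ?thesis ..
qed

lemma cube_adj_iff_flip: "cube_adj x y \<longleftrightarrow> (\<exists>i. y = flip x i)"
proof
  assume "cube_adj x y"
  then obtain i where "{i. x i \<noteq> y i} = {i}"
    unfolding cube_adj_def by (auto simp: card_1_singleton_iff)
  then have "y = flip x i" by (auto simp: flip_def fun_eq_iff)
  then show "\<exists>i. y = flip x i" by blast
next
  assume "\<exists>i. y = flip x i"
  then obtain i where "y = flip x i" by blast
  then have "{i. x i \<noteq> y i} = {i}" by (auto simp: flip_def)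
  then show "cube_adj x y" unfolding cube_adj_def by simp
qed

lemma cube_adj_sym: "cube_adj x y \<longleftrightarrow> cube_adj y x"
  by (metis cube_adj_iff_flip flip_flip)

lemma cube_adj_flip_left: "cube_adj (flip x i) y \<longleftrightarrow> cube_adj x (flip y i)"
  unfolding cube_adj_iff_flip by (metis flip_commute flip_flip)

lemma sum_UNIV_eq_single:
  fixes g :: "'a::finite \<Rightarrow> 'b::comm_monoid_add"
  assumes "\<And>k. k \<noteq> i \<Longrightarrow> g k = 0"
  shows "(\<Sum>k\<in>UNIV. g k) = g i"
  using assms by (subst sum.mono_neutral_right[of UNIV "{i}"]) auto

lemma sum_UNIV_eq_two:
  fixes g :: "'a::finite \<Rightarrow> 'b::comm_monoid_add"
  assumes "i \<noteq> j" "\<And>k. k \<noteq> i \<Longrightarrow> k \<noteq> j \<Longrightarrow> g k = 0"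
  shows "(\<Sum>k\<in>UNIV. g k) = g i + g j"
  using assms by (subst sum.mono_neutral_right[of UNIV "{i, j}"]) auto

lemma sum_cube_adj_times:
  fixes f :: "('n::finite \<Rightarrow> bool) \<Rightarrow> real"
  shows "(\<Sum>z\<in>UNIV. (if cube_adj x z then 1 else 0) * f z) = (\<Sum>i\<in>UNIV. f (flip x i))"
proof -
  have "(\<Sum>z\<in>UNIV. (if cube_adj x z then 1 else 0) * f z) = sum f {z. cube_adj x z}"
    by (simp add: sum.If_cases if_distrib[of "\<lambda>a. a * _"])
  also have "{z. cube_adj x z} = range (flip x)"
    by (auto simp: cube_adj_iff_flip)
  also have "sum f (range (flip x)) = (\<Sum>i\<in>UNIV. f (flip x i))"
    by (simp add: sum.reindex inj_flip)
  finally show ?thesis .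
qed

lemma matrix_mult_cube_A_nth: "(B ** cube_A) $ x $ y = (\<Sum>i\<in>UNIV. B $ x $ flip y i)"
  using sum_cube_adj_times[of y "\<lambda>z. B $ x $ z"]
  by (simp add: matrix_matrix_mult_def cube_A_def cube_adj_sym[of _ y] mult.commute)

lemma cube_A_matrix_mult_nth: "(cube_A ** B) $ x $ y = (\<Sum>i\<in>UNIV. B $ flip x i $ y)"
  by (simp add: matrix_matrix_mult_def cube_A_def sum_cube_adj_times)

lemma cube_alpha_nth: "cube_alpha i $ x $ y = (if y = flip x i then 1 else 0)"
  by (auto simp: cube_alpha_def i_adj_def flip_def fun_eq_iff)

lemma cube_alpha_matrix_mult_nth: "(cube_alpha i ** M) $ x $ y = M $ flip x i $ y"
  by (simp add: matrix_matrix_mult_def cube_alpha_nth if_distrib[of "\<lambda>a. a * _"] sum.If_cases)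

lemma matrix_mult_cube_alpha_nth:
  fixes M :: "real ^ ('n::finite \<Rightarrow> bool) ^ 'm"
  shows "(M ** cube_alpha i) $ x $ y = M $ x $ flip y i"
  by (simp add: matrix_matrix_mult_def cube_alpha_nth eq_flip_iff[of y]
      if_distrib[of "\<lambda>a. _ * a"] sum.If_cases)

lemma A_like_nth_eq_0:
  assumes "A_like B" "u \<noteq> v" "\<not> cube_adj u v"
  shows "B $ u $ v = 0"
  using assms by (simp add: A_like_def)

lemma A_like_nth_eq_0_if_differ_twice:
  assumes "A_like B" "i \<noteq> k" "u i \<noteq> v i" "u k \<noteq> v k"
  shows "B $ u $ v = 0"
proof (rule A_like_nth_eq_0[OF assms(1)])
  have "{i, k} \<subseteq> {m. u m \<noteq> v m}"
    using assms(3,4) by auto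
  then have "2 \<le> card {m. u m \<noteq> v m}"
    using card_mono[of "{m. u m \<noteq> v m}" "{i, k}"] assms(2) by simp
  then show "u \<noteq> v" "\<not> cube_adj u v"
    by (auto simp: cube_adj_def)
qed

lemma A_like_sum_flip_eq:
  assumes "A_like B"
  shows "(\<Sum>k\<in>UNIV. B $ u $ flip v k) = (\<Sum>k\<in>UNIV. B $ flip u k $ v)"
  using assms by (simp add: A_like_def flip: matrix_mult_cube_A_nth cube_A_matrix_mult_nth)

lemma A_like_diag_flip:
  assumes "A_like B"
  shows "B $ flip x i $ flip x i = B $ x $ x"
proof -
  have "B $ x $ x = (\<Sum>k\<in>UNIV. B $ x $ flip (flip x i) k)"
    using A_like_nth_eq_0_if_differ_twice[OF assms, of i k x "flip (flip x i) k" for k]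
    by (subst sum_UNIV_eq_single[where i = i]) (auto simp: flip_apply)
  also have "\<dots> = (\<Sum>k\<in>UNIV. B $ flip x k $ flip x i)"
    by (rule A_like_sum_flip_eq[OF assms])
  also have "\<dots> = B $ flip x i $ flip x i"
    using A_like_nth_eq_0_if_differ_twice[OF assms, of i k "flip x k" "flip x i" for k]
    by (subst sum_UNIV_eq_single[where i = i]) (auto simp: flip_apply)
  finally show ?thesis by simp
qed

lemma A_like_square_diagonal:
  assumes "A_like B" "i \<noteq> j"
  shows "B $ x $ flip x i + B $ x $ flip x j
      = B $ flip x i $ flip (flip x i) j + B $ flip x j $ flip (flip x i) j"
proof -
  have "B $ x $ flip x i + B $ x $ flip x j = (\<Sum>k\<in>UNIV. B $ x $ flip (flip (flip x i) j) k)"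
    using assms(2) A_like_nth_eq_0_if_differ_twice[OF assms(1), of i j x "flip (flip (flip x i) j) k" for k]
    by (subst sum_UNIV_eq_two[where i = j and j = i]) (auto simp: flip_apply, metis flip_commute flip_flip)
  also have "\<dots> = (\<Sum>k\<in>UNIV. B $ flip x k $ flip (flip x i) j)"
    by (rule A_like_sum_flip_eq[OF assms(1)])
  also have "\<dots> = B $ flip x i $ flip (flip x i) j + B $ flip x j $ flip (flip x i) j"
    using assms(2) A_like_nth_eq_0_if_differ_twice[OF assms(1), of i j "flip x k" "flip (flip x i) j" for k]
    by (subst sum_UNIV_eq_two[where i = i and j = j]) (auto simp: flip_apply)
  finally show ?thesis .
qed

lemma A_like_square_antidiagonal:
  assumes "A_like B" "i \<noteq> j"
  shows "B $ flip x i $ x + B $ flip x i $ flip (flip x i) j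
      = B $ x $ flip x j + B $ flip (flip x i) j $ flip x j"
proof -
  have "B $ flip x i $ x + B $ flip x i $ flip (flip x i) j
      = (\<Sum>k\<in>UNIV. B $ flip x i $ flip (flip x j) k)"
    using assms(2) A_like_nth_eq_0_if_differ_twice[OF assms(1), of j k "flip x i" "flip (flip x j) k" for k]
    by (subst sum_UNIV_eq_two[where i = j and j = i]) (auto simp: flip_apply flip_commute[of x i])
  also have "\<dots> = (\<Sum>k\<in>UNIV. B $ flip (flip x i) k $ flip x j)"
    by (rule A_like_sum_flip_eq[OF assms(1)])
  also have "\<dots> = B $ x $ flip x j + B $ flip (flip x i) j $ flip x j"
    using assms(2) A_like_nth_eq_0_if_differ_twice[OF assms(1), of i k "flip (flip x i) k" "flip x j" for k]
    by (subst sum_UNIV_eq_two[where i = i and j = j]) (auto simp: flip_apply)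
  finally show ?thesis .
qed

lemma symmetric_nth: "transpose B = B \<Longrightarrow> B $ u $ v = B $ v $ u"
  by (metis transpose_def vec_lambda_beta)

lemma symmetric_A_like_flip_edge:
  assumes "A_like B" "transpose B = B"
  shows "B $ flip x i $ flip (flip x i) j = B $ x $ flip x j"
proof (cases "i = j")
  case True
  then show ?thesis using symmetric_nth[OF assms(2)] by simp
next
  case False
  have "B $ flip (flip x i) j $ flip x j = B $ flip x j $ flip (flip x i) j"
    by (rule symmetric_nth[OF assms(2)])
  moreover have "B $ flip x i $ x = B $ x $ flip x i"
    by (rule symmetric_nth[OF assms(2)])
  ultimately show ?thesis
    using A_like_square_diagonal[OF assms(1) False, of x]
      A_like_square_antidiagonal[OF assms(1) False, of x]
    by linarith
qed

definition cube_combination :: "real \<Rightarrow> ('n::finite \<Rightarrow> real) \<Rightarrow> 'n cube_matrix" where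
  "cube_combination c d = c *\<^sub>R mat 1 + (\<Sum>j\<in>UNIV. d j *\<^sub>R cube_alpha j)"

lemma cube_combination_nth:
  "cube_combination c d $ x $ y
    = (if y = x then c else 0) + (\<Sum>j\<in>UNIV. if y = flip x j then d j else 0)"
  by (simp add: cube_combination_def sum_component mat_def cube_alpha_nth
      if_distrib[of "\<lambda>a. _ * a"] cong: if_cong)

lemma cube_combination_nth_diag: "cube_combination c d $ x $ x = c"
  by (simp add: cube_combination_nth)

lemma cube_combination_nth_flip: "cube_combination c d $ x $ flip x i = d i"
  by (simp add: cube_combination_nth sum_UNIV_eq_single[where i = i])

lemma cube_combination_nth_far:
  "y \<noteq> x \<Longrightarrow> \<not> cube_adj x y \<Longrightarrow> cube_combination c d $ x $ y = 0"
  by (auto simp: cube_combination_nth cube_adj_iff_flip intro: sum.neutral)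

lemma symmetric_A_like_eq_cube_combination:
  assumes "A_like B" "transpose B = B"
  shows "B = cube_combination (B $ z $ z) (\<lambda>j. B $ z $ flip z j)"
proof -
  have "B $ x $ y = cube_combination (B $ z $ z) (\<lambda>j. B $ z $ flip z j) $ x $ y" for x y
  proof -
    consider "y = x" | i where "y = flip x i" | "y \<noteq> x" "\<not> cube_adj x y"
      using cube_adj_iff_flip by blast
    then show ?thesis
    proof cases
      case 1
      have "B $ x $ x = B $ z $ z"
        using A_like_diag_flip[OF assms(1)] by (rule flip_invariant_const)
      with 1 show ?thesis
        by (simp only: cube_combination_nth_diag)
    next
      case 2
      have "B $ x $ flip x i = B $ z $ flip z i"
        using symmetric_A_like_flip_edge[OF assms]
        by (rule flip_invariant_const[where f = "\<lambda>x. B $ x $ flip x i"])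
      with 2 show ?thesis
        by (simp only: cube_combination_nth_flip)
    next
      case 3
      then have "B $ x $ y = 0"
        by (intro A_like_nth_eq_0[OF assms(1)]) auto
      with 3 show ?thesis
        by (simp add: cube_combination_nth_far)
    qed
  qed
  then show ?thesis
    unfolding vec_eq_iff by blast
qed

lemma subspace_symmetric_A_like: "subspace {B :: 'n::finite cube_matrix. transpose B = B \<and> A_like B}"
proof (unfold subspace_def, intro conjI ballI allI)
  show "0 \<in> {B :: 'n cube_matrix. transpose B = B \<and> A_like B}"
    by (simp add: vec_eq_iff transpose_def A_like_def matrix_matrix_mult_def)
next
  fix B C :: "'n cube_matrix"
  assume "B \<in> {B. transpose B = B \<and> A_like B}" "C \<in> {B. transpose B = B \<and> A_like B}"
  moreover have "transpose (B + C) = transpose B + transpose C"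
    by (simp add: vec_eq_iff transpose_def)
  moreover have "(B + C) ** cube_A = B ** cube_A + C ** cube_A"
    by (simp add: vec_eq_iff matrix_matrix_mult_def sum.distrib distrib_right)
  ultimately show "B + C \<in> {B. transpose B = B \<and> A_like B}"
    by (auto simp: A_like_def matrix_add_ldistrib)
next
  fix r :: real and B :: "'n cube_matrix"
  assume "B \<in> {B. transpose B = B \<and> A_like B}"
  then show "r *\<^sub>R B \<in> {B. transpose B = B \<and> A_like B}"
    by (auto simp: A_like_def transpose_scalar matrix_scalar_ac scalar_matrix_assoc[symmetric])
qed

lemma mat_1_symmetric_A_like:
  "transpose (mat 1 :: 'n::finite cube_matrix) = mat 1 \<and> A_like (mat 1 :: 'n cube_matrix)"
  by (simp add: A_like_def) (simp add: mat_def)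

lemma cube_alpha_symmetric_A_like: "transpose (cube_alpha i) = cube_alpha i \<and> A_like (cube_alpha i)"
proof -
  have "transpose (cube_alpha i) = cube_alpha i"
    by (auto simp: vec_eq_iff transpose_def cube_alpha_nth)
  moreover have "cube_alpha i ** cube_A = cube_A ** cube_alpha i"
    by (simp add: vec_eq_iff cube_alpha_matrix_mult_nth matrix_mult_cube_alpha_nth
        cube_A_def cube_adj_flip_left)
  ultimately show ?thesis
    by (auto simp: A_like_def cube_alpha_nth cube_adj_iff_flip)
qed

lemma inj_cube_alpha: "inj (cube_alpha :: 'n::finite \<Rightarrow> 'n cube_matrix)"
proof (rule injI)
  fix i j :: 'n
  assume "cube_alpha i = cube_alpha j"
  then have "cube_alpha i $ x $ flip x i = cube_alpha j $ x $ flip x i" for x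
    by simp
  then show "i = j" by (simp add: cube_alpha_nth split: if_splits)
qed

lemma mat_1_notin_range_cube_alpha: "mat 1 \<notin> range (cube_alpha :: 'n::finite \<Rightarrow> 'n cube_matrix)"
proof
  assume "mat 1 \<in> range (cube_alpha :: 'n \<Rightarrow> 'n cube_matrix)"
  then obtain i :: 'n where "mat 1 = cube_alpha i" by blast
  then have "(mat 1 :: 'n cube_matrix) $ x $ x = cube_alpha i $ x $ x" for x
    by simp
  then show False by (simp add: cube_alpha_nth mat_def)
qed

lemma sum_mat_1_cube_alpha:
  "(\<Sum>v\<in>insert (mat 1) (range cube_alpha). u v *\<^sub>R v)
    = cube_combination (u (mat 1)) (\<lambda>j. u (cube_alpha j :: 'n::finite cube_matrix))"
  by (simp add: cube_combination_def sum.reindex mat_1_notin_range_cube_alpha inj_cube_alpha)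

lemma independent_mat_1_cube_alpha:
  "independent (insert (mat 1) (range (cube_alpha :: 'n::finite \<Rightarrow> 'n cube_matrix)))"
proof
  assume "dependent (insert (mat 1) (range (cube_alpha :: 'n \<Rightarrow> 'n cube_matrix)))"
  then obtain u where u: "\<exists>v\<in>insert (mat 1) (range (cube_alpha :: 'n \<Rightarrow> _)). u v \<noteq> 0"
    and "cube_combination (u (mat 1)) (\<lambda>j. u (cube_alpha j :: 'n cube_matrix)) = 0"
    by (auto simp: dependent_finite sum_mat_1_cube_alpha)
  then have "u (mat 1) = 0" "u (cube_alpha i) = 0" for x :: "'n \<Rightarrow> bool" and i :: 'n
    using cube_combination_nth_diag[of _ _ x] cube_combination_nth_flip[of _ _ x i]
    by (metis zero_index)+
  with u show False by blast
qed

lemma span_mat_1_cube_alpha: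
  "span (insert (mat 1) (range cube_alpha)) = {B :: 'n::finite cube_matrix. transpose B = B \<and> A_like B}"
proof
  show "span (insert (mat 1) (range cube_alpha)) \<subseteq> {B :: 'n cube_matrix. transpose B = B \<and> A_like B}"
    using mat_1_symmetric_A_like cube_alpha_symmetric_A_like
    by (intro span_minimal subspace_symmetric_A_like) auto
  show "{B :: 'n cube_matrix. transpose B = B \<and> A_like B} \<subseteq> span (insert (mat 1) (range cube_alpha))"
  proof
    fix B :: "'n cube_matrix"
    assume "B \<in> {B. transpose B = B \<and> A_like B}"
    then have "B = cube_combination (B $ z $ z) (\<lambda>j. B $ z $ flip z j)" for z
      by (auto intro: symmetric_A_like_eq_cube_combination)
    moreover have "cube_combination c d \<in> span (insert (mat 1) (range cube_alpha))" for c d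
      unfolding cube_combination_def
      by (intro span_add span_scale span_sum span_base) auto
    ultimately show "B \<in> span (insert (mat 1) (range cube_alpha))"
      by metis
  qed
qed

theorem corollary8p4:
  fixes S :: "(real ^ ('n::finite \<Rightarrow> bool) ^ ('n \<Rightarrow> bool)) set"
  defines "S \<equiv> {B. transpose B = B \<and> A_like B}"
  shows "inj (cube_alpha :: 'n \<Rightarrow> _)
    \<and> mat 1 \<notin> range (cube_alpha :: 'n \<Rightarrow> _)
    \<and> independent (insert (mat 1) (range (cube_alpha :: 'n \<Rightarrow> _)))
    \<and> span (insert (mat 1) (range (cube_alpha :: 'n \<Rightarrow> _))) = S
    \<and> dim S = CARD('n) + 1"
proof -
  let ?T = "insert (mat 1) (range (cube_alpha :: 'n \<Rightarrow> 'n cube_matrix))"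
  have "dim S = card ?T"
    unfolding S_def span_mat_1_cube_alpha[symmetric]
    by (rule dim_span_eq_card_independent[OF independent_mat_1_cube_alpha])
  also have "card ?T = CARD('n) + 1"
    by (simp add: card_image mat_1_notin_range_cube_alpha inj_cube_alpha)
  finally show ?thesis
    unfolding S_def
    by (simp add: inj_cube_alpha mat_1_notin_range_cube_alpha independent_mat_1_cube_alpha
        span_mat_1_cube_alpha)
qed

end
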